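(* Let $Q=\partial_\psi S$ be a $\partial_\psi$-delta operator, with $S\in\Sigma_\psi$ invertible, and let $(p_n)_{n\ge0}$ be its $\partial_\psi$-basic polynomial sequence. Then for all $n>0$: (1) $p_n(x)=Q'\,S^{-n-1}x^n$; (2) $p_n(x)=S^{-n}x^n-\frac{n_\psi}{n}\,(S^{-n})'\,x^{n-1}$; (3) $p_n(x)=\frac{n_\psi}{n}\,\hat x_\psi\,S^{-n}x^{n-1}$; (4) (ψ-Rodrigues formula) $p_n(x)=\frac{n_\psi}{n}\,\hat x_\psi\,(Q')^{-1}p_{n-1}(x)$, where $Q'$ is invertible in $\Sigma_\psi$.
   Context: Let $F$ be a field of characteristic $0$, $P=F[x]$. Fix $(\psi_n)_{n\ge0}$ in $F$ with $\psi_0=1$, $\psi_n\ne0$, $\psi_{-1}=0$; $n_\psi=\psi_{n-1}/\psi_n$, $n_\psi!=1/\psi_n$, $0_\psi!=1$. $\partial_\psi x^n=n_\psi x^{n-1}$ (linear); $E^a(\partial_\psi)=\sum_k\frac{a^k}{k_\psi!}\partial_\psi^k$. $\Sigma_\psi$: algebra of linear $T:P\to P$ commuting with all $E^a(\partial_\psi)$. A $\partial_\psi$-delta operator is $Q\in\Sigma_\psi$ with $Q(x)$ a nonzero constant; its $\partial_\psi$-basic sequence: $\deg p_n=n$, $p_0=1$, $p_n(0)=0$ for $n>0$, $Qp_n=n_\psi p_{n-1}$. $\hat x_\psi x^n=\frac{n+1}{(n+1)_\psi}x^{n+1}$ (linear); the Pincherle $\psi$-derivative of $T\in\Sigma_\psi$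 is $T'=T\hat x_\psi-\hat x_\psi T\in\Sigma_\psi$. *)

theory Defs
  imports "HOL-Computational_Algebra.Polynomial"
begin

text \<open>Psi-umbral calculus on P = F[x], F a field of characteristic 0.
  The sequence psi is an arbitrary function nat => F; the standing assumptions
  psi 0 = 1 and psi n \<noteq> 0 are stated as hypotheses of the theorem.\<close>

definition admissible_psi :: "(nat \<Rightarrow> 'a::field_char_0) \<Rightarrow> bool" where
  "admissible_psi psi \<longleftrightarrow> psi 0 = 1 \<and> (\<forall>n. psi n \<noteq> 0)"

text \<open>n_psi = psi (n-1) / psi n, with psi(-1) = 0, so 0_psi = 0.\<close>
definition nsub :: "(nat \<Rightarrow> 'a::field_char_0) \<Rightarrow> nat \<Rightarrow> 'a" where
  "nsub psi n = (if n = 0 then 0 else psi (n - 1) / psi n)"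

definition nfact :: "(nat \<Rightarrow> 'a::field_char_0) \<Rightarrow> nat \<Rightarrow> 'a" where
  "nfact psi n = 1 / psi n"

definition psi_deriv :: "(nat \<Rightarrow> 'a::field_char_0) \<Rightarrow> 'a poly \<Rightarrow> 'a poly" where
  "psi_deriv psi p = (\<Sum>k\<le>degree p. monom (nsub psi k * coeff p k) (k - 1))"

text \<open>E^a(partial_psi) = sum_k a^k / k_psi! partial_psi^k (finite on each polynomial).\<close>
definition psi_exp :: "(nat \<Rightarrow> 'a::field_char_0) \<Rightarrow> 'a \<Rightarrow> 'a poly \<Rightarrow> 'a poly" where
  "psi_exp psi a p = (\<Sum>k\<le>degree p. smult (a ^ k / nfact psi k) ((psi_deriv psi ^^ k) p))"

definition poly_linear :: "('a::field_char_0 poly \<Rightarrow> 'a poly) \<Rightarrow> bool" where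
  "poly_linear T \<longleftrightarrow> (\<forall>p q. T (p + q) = T p + T q) \<and> (\<forall>c p. T (smult c p) = smult c (T p))"

definition Sigma_psi :: "(nat \<Rightarrow> 'a::field_char_0) \<Rightarrow> ('a poly \<Rightarrow> 'a poly) set" where
  "Sigma_psi psi = {T. poly_linear T \<and> (\<forall>a p. T (psi_exp psi a p) = psi_exp psi a (T p))}"

definition Sigma_inverse :: "(nat \<Rightarrow> 'a::field_char_0) \<Rightarrow> ('a poly \<Rightarrow> 'a poly) \<Rightarrow> ('a poly \<Rightarrow> 'a poly) \<Rightarrow> bool" where
  "Sigma_inverse psi T R \<longleftrightarrow> T \<in> Sigma_psi psi \<and> R \<in> Sigma_psi psi \<and> T \<circ> R = id \<and> R \<circ> T = id"

definition psi_delta :: "(nat \<Rightarrow> 'a::field_char_0) \<Rightarrow> ('a poly \<Rightarrow> 'a poly) \<Rightarrow> bool" where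
  "psi_delta psi Q \<longleftrightarrow> Q \<in> Sigma_psi psi \<and> (\<exists>c. c \<noteq> 0 \<and> Q [:0, 1:] = [:c:])"

text \<open>Basic sequence: Q p_n = n_psi p_(n-1); for n = 0 the right side is 0 since 0_psi = 0.\<close>
definition psi_basic_seq :: "(nat \<Rightarrow> 'a::field_char_0) \<Rightarrow> ('a poly \<Rightarrow> 'a poly) \<Rightarrow> (nat \<Rightarrow> 'a poly) \<Rightarrow> bool" where
  "psi_basic_seq psi Q p \<longleftrightarrow>
     p 0 = 1 \<and> (\<forall>n. degree (p n) = n) \<and> (\<forall>n>0. poly (p n) 0 = 0) \<and>
     (\<forall>n. Q (p n) = smult (nsub psi n) (p (n - 1)))"

definition xhat :: "(nat \<Rightarrow> 'a::field_char_0) \<Rightarrow> 'a poly \<Rightarrow> 'a poly" where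
  "xhat psi p = (\<Sum>k\<le>degree p. monom (of_nat (k + 1) / nsub psi (k + 1) * coeff p k) (k + 1))"

definition pincherle :: "(nat \<Rightarrow> 'a::field_char_0) \<Rightarrow> ('a poly \<Rightarrow> 'a poly) \<Rightarrow> 'a poly \<Rightarrow> 'a poly" where
  "pincherle psi T = (\<lambda>p. T (xhat psi p) - xhat psi (T p))"

end

theory Submission
  imports Defs
begin

text \<open>
  Everything happens in the algebra \<open>\<Sigma>\<^sub>\<psi>\<close>. Its elements are exactly the linear maps
  commuting with \<open>\<partial>\<^sub>\<psi>\<close>, and such a map is determined by the constant terms of its values
  on the monomials; this makes \<open>\<Sigma>\<^sub>\<psi>\<close> commutative and shows that \<open>T \<in> \<Sigma>\<^sub>\<psi>\<close> is invertible
  as soon as \<open>T 1\<close> has a nonzero constant term. The Pincherle derivative is a derivation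
  with \<open>\<partial>\<^sub>\<psi>' = 1\<close>, so \<open>Q' = S + \<partial>\<^sub>\<psi> S'\<close> and \<open>(S\<^sup>-\<^sup>n)' = -n S\<^sup>-\<^sup>n\<^sup>-\<^sup>1 S'\<close>; this turns (1) into (2),
  and (2) into (3) by the definition of \<open>T'\<close> applied to \<open>x\<^sup>n\<^sup>-\<^sup>1\<close>. The polynomials
  \<open>r\<^sub>n = Q' S\<^sup>-\<^sup>n\<^sup>-\<^sup>1 x\<^sup>n\<close> satisfy \<open>Q r\<^sub>n = n\<^sub>\<psi> r\<^sub>n\<^sub>-\<^sub>1\<close> because \<open>Q\<close> and \<open>Q'\<close> commute, \<open>r\<^sub>0 = 1\<close>, and \<open>r\<^sub>n(0) = 0\<close>
  by (3); since the kernel of \<open>Q\<close> consists of the constants, \<open>r\<^sub>n = p\<^sub>n\<close>. Finally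
  \<open>Q' 1 = S 1\<close>, so \<open>Q'\<close> is invertible and \<open>(Q')\<^sup>-\<^sup>1 p\<^sub>n\<^sub>-\<^sub>1 = S\<^sup>-\<^sup>n x\<^sup>n\<^sup>-\<^sup>1\<close>, which turns (3) into (4).
\<close>

section \<open>The operators \<open>psi_deriv\<close> and \<open>xhat\<close>\<close>

lemma admissible_psi_nonzero: "admissible_psi psi \<Longrightarrow> psi n \<noteq> 0"
  by (simp add: admissible_psi_def)

lemma nsub_nonzero: "admissible_psi psi \<Longrightarrow> n > 0 \<Longrightarrow> nsub psi n \<noteq> 0"
  by (simp add: nsub_def admissible_psi_nonzero)

lemma coeff_psi_deriv: "coeff (psi_deriv psi p) j = nsub psi (Suc j) * coeff p (Suc j)"
proof -
  have "coeff (psi_deriv psi p) j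
      = (\<Sum>k\<le>degree p. if k = Suc j then nsub psi k * coeff p k else 0)"
    unfolding psi_deriv_def coeff_sum coeff_monom
    by (rule sum.cong) (auto simp: nsub_def)
  then show ?thesis
    by (auto simp: coeff_eq_0)
qed

lemma coeff_xhat:
  "coeff (xhat psi p) j = (if j = 0 then 0 else of_nat j / nsub psi j * coeff p (j - 1))"
proof -
  have "coeff (xhat psi p) j
      = (\<Sum>k\<le>degree p. if k = j - 1 \<and> j > 0 then of_nat j / nsub psi j * coeff p k else 0)"
    unfolding xhat_def coeff_sum coeff_monom
    by (rule sum.cong) auto
  then show ?thesis
    by (cases j) (auto simp: coeff_eq_0)
qed

lemma psi_deriv_monom: "psi_deriv psi (monom c n) = monom (nsub psi n * c) (n - 1)"
  by (cases n) (auto simp: poly_eq_iff coeff_psi_deriv nsub_def)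

lemma xhat_monom: "xhat psi (monom c n) = monom (of_nat (Suc n) / nsub psi (Suc n) * c) (Suc n)"
  by (auto simp: poly_eq_iff coeff_xhat)

lemma psi_deriv_one [simp]: "psi_deriv psi 1 = 0"
  by (simp add: poly_eq_iff coeff_psi_deriv)

lemma coeff_psi_deriv_funpow:
  assumes "admissible_psi psi"
  shows "coeff ((psi_deriv psi ^^ k) p) j = psi j / psi (j + k) * coeff p (j + k)"
  using assms by (induction k arbitrary: j)
    (simp_all add: coeff_psi_deriv nsub_def admissible_psi_nonzero)

lemma psi_taylor_coeff:
  "admissible_psi psi \<Longrightarrow> coeff p i = psi i * coeff ((psi_deriv psi ^^ i) p) 0"
  by (simp add: coeff_psi_deriv_funpow admissible_psi_def)

lemma psi_deriv_funpow_monom: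
  "admissible_psi psi \<Longrightarrow> (psi_deriv psi ^^ i) (monom c m)
     = (if i \<le> m then monom (psi (m - i) / psi m * c) (m - i) else 0)"
  by (auto simp: poly_eq_iff coeff_psi_deriv_funpow admissible_psi_nonzero)

lemma psi_deriv_funpow_beyond_degree:
  assumes "admissible_psi psi" "degree p \<le> k"
  shows "(psi_deriv psi ^^ k) p = [:coeff p k / psi k:]"
  using assms by (auto simp: poly_eq_iff coeff_psi_deriv_funpow coeff_pCons admissible_psi_def
      coeff_eq_0 split: nat.split)

lemma psi_deriv_xhat:
  assumes "admissible_psi psi"
  shows "psi_deriv psi (xhat psi f) = f + xhat psi (psi_deriv psi f)"
proof (rule poly_eqI)
  fix n
  have "\<And>k. nsub psi (Suc k) \<noteq> 0"
    using nsub_nonzero[OF assms] by simp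
  then show "coeff (psi_deriv psi (xhat psi f)) n = coeff (f + xhat psi (psi_deriv psi f)) n"
    by (cases n) (auto simp: coeff_xhat coeff_psi_deriv field_simps)
qed

lemma psi_deriv_eq_0_imp_const:
  assumes "admissible_psi psi" "psi_deriv psi f = 0"
  shows "f = [:coeff f 0:]"
proof (rule poly_eqI)
  fix n
  show "coeff f n = coeff [:coeff f 0:] n"
  proof (cases n)
    case (Suc k)
    have "coeff (psi_deriv psi f) k = 0" using assms(2) by simp
    with Suc nsub_nonzero[OF assms(1), of "Suc k"] show ?thesis
      by (simp add: coeff_psi_deriv)
  qed simp
qed

lemma psi_exp_eq_sum:
  assumes "admissible_psi psi" "degree p \<le> N"
  shows "psi_exp psi a p = (\<Sum>k\<le>N. smult (a ^ k * psi k) ((psi_deriv psi ^^ k) p))"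
  unfolding psi_exp_def nfact_def divide_divide_eq_right div_by_1
  by (rule sum.mono_neutral_left)
    (use assms in \<open>auto simp: poly_eq_iff coeff_psi_deriv_funpow coeff_eq_0\<close>)

lemma poly_linear_add: "poly_linear T \<Longrightarrow> T (p + q) = T p + T q"
  by (simp add: poly_linear_def)

lemma poly_linear_smult: "poly_linear T \<Longrightarrow> T (smult c p) = smult c (T p)"
  by (simp add: poly_linear_def)

lemma poly_linear_zero: "poly_linear T \<Longrightarrow> T 0 = 0"
  using poly_linear_smult[of T 0 0] by simp

lemma poly_linear_minus: "poly_linear T \<Longrightarrow> T (- p) = - T p"
  using poly_linear_smult[of T "-1" p] by simp

lemma poly_linear_diff: "poly_linear T \<Longrightarrow> T (p - q) = T p - T q"
  using poly_linear_add[of T p "- q"] poly_linear_minus[of T q] by simp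

lemma poly_linear_sum: "poly_linear T \<Longrightarrow> T (sum f A) = (\<Sum>a\<in>A. T (f a))"
  by (induction A rule: infinite_finite_induct) (auto simp: poly_linear_zero poly_linear_add)

lemma poly_linear_monom: "poly_linear T \<Longrightarrow> T (monom c k) = smult c (T (monom 1 k))"
  using poly_linear_smult[of T c "monom 1 k"] by (simp add: smult_monom)

lemma poly_linear_expand:
  assumes "poly_linear T" "degree p \<le> N"
  shows "T p = (\<Sum>i\<le>N. smult (coeff p i) (T (monom 1 i)))"
proof -
  have "T p = T (\<Sum>i\<le>N. monom (coeff p i) i)"
    using poly_as_sum_of_monoms'[OF assms(2)] by simp
  then show ?thesis
    using assms(1) by (simp add: poly_linear_sum poly_linear_monom[OF assms(1), of "coeff p _"])
qed

lemma poly_linear_id: "poly_linear id"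
  by (simp add: poly_linear_def)

lemma poly_linear_psi_deriv: "poly_linear (psi_deriv psi)"
  unfolding poly_linear_def by (auto simp: poly_eq_iff coeff_psi_deriv algebra_simps)

lemma poly_linear_xhat: "poly_linear (xhat psi)"
  unfolding poly_linear_def by (auto simp: poly_eq_iff coeff_xhat algebra_simps)

section \<open>The algebra \<open>\<Sigma>\<^sub>\<psi>\<close>\<close>

lemma Sigma_psi_linear: "T \<in> Sigma_psi psi \<Longrightarrow> poly_linear T"
  by (simp add: Sigma_psi_def)

lemma Sigma_psi_id: "id \<in> Sigma_psi psi"
  by (simp add: Sigma_psi_def poly_linear_id)

lemma Sigma_psi_comp: "T \<in> Sigma_psi psi \<Longrightarrow> U \<in> Sigma_psi psi \<Longrightarrow> T \<circ> U \<in> Sigma_psi psi"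
  by (simp add: Sigma_psi_def poly_linear_def)

lemma Sigma_psi_funpow: "T \<in> Sigma_psi psi \<Longrightarrow> T ^^ n \<in> Sigma_psi psi"
  by (induction n) (auto simp: Sigma_psi_id Sigma_psi_comp)

lemma Sigma_psi_inv:
  assumes T: "T \<in> Sigma_psi psi" and "bij T"
  shows "inv T \<in> Sigma_psi psi"
proof -
  define R where "R = inv T"
  have TR: "T (R q) = q" and RT: "R (T q) = q" for q
    using \<open>bij T\<close> by (simp_all add: R_def bij_is_surj bij_is_inj surj_f_inv_f)
  have L: "poly_linear T" and E: "\<And>a p. T (psi_exp psi a p) = psi_exp psi a (T p)"
    using T by (simp_all add: Sigma_psi_def)
  have "R (p + q) = R p + R q" for p q
  proof -
    have "R (p + q) = R (T (R p) + T (R q))" by (simp only: TR)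
    also have "\<dots> = R (T (R p + R q))" by (simp only: poly_linear_add[OF L])
    finally show ?thesis by (simp only: RT)
  qed
  moreover have "R (smult c p) = smult c (R p)" for c p
  proof -
    have "R (smult c p) = R (smult c (T (R p)))" by (simp only: TR)
    also have "\<dots> = R (T (smult c (R p)))" by (simp only: poly_linear_smult[OF L])
    finally show ?thesis by (simp only: RT)
  qed
  moreover have "R (psi_exp psi a p) = psi_exp psi a (R p)" for a p
  proof -
    have "R (psi_exp psi a p) = R (psi_exp psi a (T (R p)))" by (simp only: TR)
    also have "\<dots> = R (T (psi_exp psi a (R p)))" by (simp only: E)
    finally show ?thesis by (simp only: RT)
  qed
  ultimately show ?thesis
    by (simp add: Sigma_psi_def poly_linear_def R_def)
qed

lemma Sigma_psi_iff:
  assumes psi: "admissible_psi psi"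
  shows "T \<in> Sigma_psi psi \<longleftrightarrow>
    poly_linear T \<and> (\<forall>p. T (psi_deriv psi p) = psi_deriv psi (T p))"
proof
  assume T: "T \<in> Sigma_psi psi"
  have L: "poly_linear T" and E: "\<And>a p. T (psi_exp psi a p) = psi_exp psi a (T p)"
    using T by (auto simp: Sigma_psi_def)
  have "coeff (T (psi_deriv psi p)) j = coeff (psi_deriv psi (T p)) j" for p j
  proof -
    define N where "N = Suc (degree p + degree (T p))"
    have N: "degree p \<le> N" "degree (T p) \<le> N" "1 \<le> N"
      by (simp_all add: N_def)
    define c where "c k = psi k * (coeff (T ((psi_deriv psi ^^ k) p)) j
      - coeff ((psi_deriv psi ^^ k) (T p)) j)" for k
    \<comment> \<open>\<open>T (E\<^sup>a p)\<close> and \<open>E\<^sup>a (T p)\<close> are polynomials in \<open>a\<close>; compare their coefficients of \<open>a\<^sup>1\<close>\<close>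
    have "poly (\<Sum>k\<le>N. monom (c k) k) a = 0" for a
    proof -
      have "coeff (T (psi_exp psi a p)) j = coeff (psi_exp psi a (T p)) j"
        by (simp only: E)
      then have "(\<Sum>k\<le>N. a ^ k * psi k * coeff (T ((psi_deriv psi ^^ k) p)) j)
          = (\<Sum>k\<le>N. a ^ k * psi k * coeff ((psi_deriv psi ^^ k) (T p)) j)"
        by (simp add: psi_exp_eq_sum[OF psi N(1)] psi_exp_eq_sum[OF psi N(2)] coeff_sum
            poly_linear_sum[OF L] poly_linear_smult[OF L])
      then show ?thesis
        by (simp add: poly_sum poly_monom c_def sum_subtractf algebra_simps)
    qed
    then have "coeff (\<Sum>k\<le>N. monom (c k) k) 1 = 0"
      using poly_all_0_iff_0 by (metis coeff_0)
    then have "c 1 = 0"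
      using N(3) by (simp add: coeff_sum)
    then show ?thesis
      using admissible_psi_nonzero[OF psi, of 1] by (simp add: c_def)
  qed
  with L show "poly_linear T \<and> (\<forall>p. T (psi_deriv psi p) = psi_deriv psi (T p))"
    by (simp add: poly_eq_iff)
next
  assume "poly_linear T \<and> (\<forall>p. T (psi_deriv psi p) = psi_deriv psi (T p))"
  then have L: "poly_linear T" and D: "\<And>p. T (psi_deriv psi p) = psi_deriv psi (T p)"
    by auto
  have Dpow: "T ((psi_deriv psi ^^ k) p) = (psi_deriv psi ^^ k) (T p)" for k p
    by (induction k) (simp_all add: D)
  have "T (psi_exp psi a p) = psi_exp psi a (T p)" for a p
  proof -
    let ?N = "degree p + degree (T p)"
    have "T (psi_exp psi a p) = (\<Sum>k\<le>?N. smult (a ^ k * psi k) (T ((psi_deriv psi ^^ k) p)))"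
      by (simp add: psi_exp_eq_sum[OF psi, of p ?N] poly_linear_sum[OF L] poly_linear_smult[OF L])
    also have "\<dots> = psi_exp psi a (T p)"
      by (simp add: psi_exp_eq_sum[OF psi, of "T p" ?N] Dpow)
    finally show ?thesis .
  qed
  with L show "T \<in> Sigma_psi psi"
    by (simp add: Sigma_psi_def)
qed

lemma Sigma_psi_commute_deriv:
  "admissible_psi psi \<Longrightarrow> T \<in> Sigma_psi psi \<Longrightarrow> T (psi_deriv psi p) = psi_deriv psi (T p)"
  by (simp add: Sigma_psi_iff)

lemma Sigma_psi_commute_deriv_funpow:
  "admissible_psi psi \<Longrightarrow> T \<in> Sigma_psi psi
    \<Longrightarrow> T ((psi_deriv psi ^^ k) p) = (psi_deriv psi ^^ k) (T p)"
  by (induction k) (simp_all add: Sigma_psi_commute_deriv)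

lemma coeff_Sigma_psi:
  "admissible_psi psi \<Longrightarrow> T \<in> Sigma_psi psi
    \<Longrightarrow> coeff (T p) i = psi i * coeff (T ((psi_deriv psi ^^ i) p)) 0"
  by (simp add: psi_taylor_coeff[of psi "T p"] Sigma_psi_commute_deriv_funpow)

lemma coeff_Sigma_psi_monom:
  assumes "admissible_psi psi" "T \<in> Sigma_psi psi"
  shows "coeff (T (monom 1 m)) i = (if i \<le> m
    then psi i * psi (m - i) / psi m * coeff (T (monom 1 (m - i))) 0 else 0)"
  using Sigma_psi_linear[OF assms(2)]
  by (subst coeff_Sigma_psi[OF assms], subst psi_deriv_funpow_monom[OF assms(1)])
    (simp add: poly_linear_monom[of T "psi (m - i) / psi m"] poly_linear_zero)

lemma coeff_Sigma_psi_beyond_degree: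
  assumes "admissible_psi psi" "T \<in> Sigma_psi psi" "degree p \<le> i"
  shows "coeff (T p) i = coeff (T 1) 0 * coeff p i"
proof -
  have "T ((psi_deriv psi ^^ i) p) = T (smult (coeff p i / psi i) 1)"
    by (simp add: psi_deriv_funpow_beyond_degree[OF assms(1,3)])
  also have "\<dots> = smult (coeff p i / psi i) (T 1)"
    by (rule poly_linear_smult[OF Sigma_psi_linear[OF assms(2)]])
  finally show ?thesis
    using admissible_psi_nonzero[OF assms(1), of i] coeff_Sigma_psi[OF assms(1,2), of p i]
    by simp
qed

lemma degree_Sigma_psi_le:
  assumes "admissible_psi psi" "T \<in> Sigma_psi psi"
  shows "degree (T p) \<le> degree p"
  by (rule degree_le) (auto simp: coeff_Sigma_psi_beyond_degree[OF assms, of p] coeff_eq_0)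

lemma Sigma_psi_psi_deriv: "admissible_psi psi \<Longrightarrow> psi_deriv psi \<in> Sigma_psi psi"
  by (simp add: Sigma_psi_iff poly_linear_psi_deriv)

lemma Sigma_psi_eqI:
  assumes psi: "admissible_psi psi" and T: "T \<in> Sigma_psi psi" and U: "U \<in> Sigma_psi psi"
    and "\<And>m. coeff (T (monom 1 m)) 0 = coeff (U (monom 1 m)) 0"
  shows "T = U"
proof
  have const: "coeff (T q) 0 = coeff (U q) 0" for q
    using assms(4)
    by (simp add: poly_linear_expand[OF Sigma_psi_linear[OF T] order_refl, of q]
        poly_linear_expand[OF Sigma_psi_linear[OF U] order_refl, of q] coeff_sum)
  show "T f = U f" for f
  proof (rule poly_eqI)
    fix i
    have "coeff (T f) i = psi i * coeff (T ((psi_deriv psi ^^ i) f)) 0"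
      by (rule coeff_Sigma_psi[OF psi T])
    also have "\<dots> = coeff (U f) i"
      by (simp only: const coeff_Sigma_psi[OF psi U, of f i])
    finally show "coeff (T f) i = coeff (U f) i" .
  qed
qed

lemma Sigma_psi_commute:
  assumes psi: "admissible_psi psi" and T: "T \<in> Sigma_psi psi" and U: "U \<in> Sigma_psi psi"
  shows "T (U f) = U (T f)"
proof -
  have const: "coeff (A (B (monom 1 m)) ) 0 = (\<Sum>i\<le>m.
      psi i * psi (m - i) / psi m * coeff (B (monom 1 (m - i))) 0 * coeff (A (monom 1 i)) 0)"
    if A: "A \<in> Sigma_psi psi" and B: "B \<in> Sigma_psi psi" for A B m
  proof -
    have "degree (B (monom 1 m)) \<le> m"
      using degree_Sigma_psi_le[OF psi B, of "monom 1 m"] by (simp add: degree_monom_eq)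
    then have "coeff (A (B (monom 1 m))) 0
        = (\<Sum>i\<le>m. coeff (B (monom 1 m)) i * coeff (A (monom 1 i)) 0)"
      by (simp add: poly_linear_expand[OF Sigma_psi_linear[OF A]] coeff_sum)
    also have "\<dots> = (\<Sum>i\<le>m.
        psi i * psi (m - i) / psi m * coeff (B (monom 1 (m - i))) 0 * coeff (A (monom 1 i)) 0)"
      by (rule sum.cong[OF refl]) (subst coeff_Sigma_psi_monom[OF psi B], simp)
    finally show ?thesis .
  qed
  have "T \<circ> U = U \<circ> T"
  proof (rule Sigma_psi_eqI[OF psi Sigma_psi_comp[OF T U] Sigma_psi_comp[OF U T]])
    fix m
    show "coeff ((T \<circ> U) (monom 1 m)) 0 = coeff ((U \<circ> T) (monom 1 m)) 0"
      unfolding comp_apply const[OF T U] const[OF U T]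
      by (rule sum.reindex_bij_witness[where i="\<lambda>i. m - i" and j="\<lambda>i. m - i"]) auto
  qed
  then show ?thesis
    by (metis comp_apply)
qed

lemma Sigma_psi_inj:
  assumes psi: "admissible_psi psi" and T: "T \<in> Sigma_psi psi" and t: "coeff (T 1) 0 \<noteq> 0"
  shows "inj T"
proof (rule injI)
  fix f g
  assume "T f = T g"
  then have "T (f - g) = 0"
    by (simp add: poly_linear_diff[OF Sigma_psi_linear[OF T]])
  then have "lead_coeff (f - g) = 0"
    using coeff_Sigma_psi_beyond_degree[OF psi T order_refl, of "f - g"] t by simp
  then show "f = g"
    by (simp only: leading_coeff_0_iff right_minus_eq)
qed

lemma Sigma_psi_surj:
  assumes psi: "admissible_psi psi" and T: "T \<in> Sigma_psi psi" and t: "coeff (T 1) 0 \<noteq> 0"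
  shows "surj T"
proof -
  have L: "poly_linear T"
    by (rule Sigma_psi_linear[OF T])
  have "q \<in> range T" if "degree q < m" for q m
    using that
  proof (induction m arbitrary: q)
    case (Suc m)
    define c where "c = coeff q m / coeff (T 1) 0"
    define q' where "q' = q - T (monom c m)"
    have "degree (T (monom c m)) \<le> m"
      using degree_Sigma_psi_le[OF psi T, of "monom c m"] degree_monom_le order_trans by blast
    then have "degree q' \<le> m"
      using Suc.prems by (simp add: q'_def degree_diff_le)
    moreover have "coeff q' m = 0"
      using t coeff_Sigma_psi_beyond_degree[OF psi T, of "monom c m" m]
      by (simp add: q'_def c_def degree_monom_le)
    ultimately have "q' = 0 \<or> degree q' < m"
      by (metis le_neq_implies_less leading_coeff_0_iff)
    then obtain f where "q' = T f"
      using Suc.IH poly_linear_zero[OF L] by (metis rangeE)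
    moreover have "q = q' + T (monom c m)"
      by (simp add: q'_def)
    ultimately have "q = T (f + monom c m)"
      by (simp add: poly_linear_add[OF L])
    then show ?case
      by blast
  qed simp
  then show ?thesis
    by (metis lessI surj_def rangeE)
qed

lemma Sigma_inverse_inv:
  "T \<in> Sigma_psi psi \<Longrightarrow> bij T \<Longrightarrow> Sigma_inverse psi T (inv T)"
  unfolding Sigma_inverse_def
  by (metis Sigma_psi_inv bij_is_inj bij_is_surj surj_iff inj_iff)

lemma Sigma_inverse_apply:
  assumes "Sigma_inverse psi S W"
  shows "S (W f) = f" and "W (S f) = f"
  using assms unfolding Sigma_inverse_def by (metis comp_apply id_apply)+

lemma Sigma_inverse_coeff_one:
  assumes psi: "admissible_psi psi" and SW: "Sigma_inverse psi S W"
  shows "coeff (S 1) 0 \<noteq> 0"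
proof
  assume c: "coeff (S 1) 0 = 0"
  have S: "S \<in> Sigma_psi psi" and W: "W \<in> Sigma_psi psi"
    using SW by (simp_all add: Sigma_inverse_def)
  have "psi_deriv psi (S 1) = 0"
    using Sigma_psi_commute_deriv[OF psi S, of 1] poly_linear_zero[OF Sigma_psi_linear[OF S]]
    by simp
  then have "S 1 = 0"
    using psi_deriv_eq_0_imp_const[OF psi, of "S 1"] c by simp
  then have "W (S 1) = 0"
    by (simp add: poly_linear_zero[OF Sigma_psi_linear[OF W]])
  then show False
    by (simp add: Sigma_inverse_apply(2)[OF SW])
qed

section \<open>The Pincherle \<open>\<psi>\<close>-derivative\<close>

lemma pincherle_id: "pincherle psi id p = 0"
  by (simp add: pincherle_def)

lemma pincherle_comp:
  "poly_linear T \<Longrightarrow> pincherle psi (T \<circ> U) p = T (pincherle psi U p) + pincherle psi T (U p)"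
  by (simp add: pincherle_def poly_linear_diff)

lemma pincherle_psi_deriv: "admissible_psi psi \<Longrightarrow> pincherle psi (psi_deriv psi) p = p"
  by (simp add: pincherle_def psi_deriv_xhat)

lemma pincherle_Sigma_psi:
  assumes psi: "admissible_psi psi" and T: "T \<in> Sigma_psi psi"
  shows "pincherle psi T \<in> Sigma_psi psi"
proof -
  have L: "poly_linear T"
    by (rule Sigma_psi_linear[OF T])
  have "poly_linear (pincherle psi T)"
    by (simp add: poly_linear_def pincherle_def poly_linear_add[OF L] poly_linear_smult[OF L]
        poly_linear_add[OF poly_linear_xhat] poly_linear_smult[OF poly_linear_xhat] smult_diff_right)
  moreover have "pincherle psi T (psi_deriv psi p) = psi_deriv psi (pincherle psi T p)" for p
    by (simp add: pincherle_def poly_linear_diff[OF poly_linear_psi_deriv] psi_deriv_xhat[OF psi]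
        Sigma_psi_commute_deriv[OF psi T, symmetric] poly_linear_add[OF L])
  ultimately show ?thesis
    by (simp add: Sigma_psi_iff[OF psi])
qed

lemma pincherle_inverse:
  assumes "poly_linear W" "S \<circ> W = id" "W \<circ> S = id"
  shows "pincherle psi W p = - W (pincherle psi S (W p))"
proof -
  have "0 = pincherle psi (W \<circ> S) (W p)"
    by (simp add: assms(3) pincherle_id)
  also have "\<dots> = W (pincherle psi S (W p)) + pincherle psi W (S (W p))"
    by (rule pincherle_comp[OF assms(1)])
  also have "S (W p) = p"
    using assms(2) by (metis comp_apply id_apply)
  finally show ?thesis
    by (simp add: eq_neg_iff_add_eq_0 add.commute)
qed

lemma pincherle_funpow:
  assumes psi: "admissible_psi psi" and T: "T \<in> Sigma_psi psi"
  shows "pincherle psi (T ^^ Suc n) p = smult (of_nat (Suc n)) ((T ^^ n) (pincherle psi T p))"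
proof (induction n arbitrary: p)
  case (Suc n)
  let ?T' = "pincherle psi T"
  have "pincherle psi (T ^^ Suc (Suc n)) p = pincherle psi (T ^^ Suc n \<circ> T) p"
    by (simp only: funpow_Suc_right[of "Suc n"])
  also have "\<dots> = (T ^^ Suc n) (?T' p) + pincherle psi (T ^^ Suc n) (T p)"
    by (rule pincherle_comp[OF Sigma_psi_linear[OF Sigma_psi_funpow[OF T]]])
  also have "pincherle psi (T ^^ Suc n) (T p) = smult (of_nat (Suc n)) ((T ^^ n) (T (?T' p)))"
    by (simp only: Suc.IH Sigma_psi_commute[OF psi pincherle_Sigma_psi[OF psi T] T])
  also have "(T ^^ n) (T (?T' p)) = (T ^^ Suc n) (?T' p)"
    by (simp only: funpow_Suc_right comp_apply)
  finally show ?case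
    by (simp only: of_nat_Suc[of "Suc n"] smult_add_left smult_1_left add.commute)
qed simp

lemma pincherle_inverse_funpow:
  assumes psi: "admissible_psi psi" and SW: "Sigma_inverse psi S W"
  shows "pincherle psi (W ^^ n) p = - smult (of_nat n) ((W ^^ Suc n) (pincherle psi S p))"
proof (cases n)
  case (Suc k)
  have S: "S \<in> Sigma_psi psi" and W: "W \<in> Sigma_psi psi"
    using SW by (simp_all add: Sigma_inverse_def)
  have W': "pincherle psi W q = - W (W (pincherle psi S q))" for q
    using pincherle_inverse[OF Sigma_psi_linear[OF W], of S psi q] SW
      Sigma_psi_commute[OF psi pincherle_Sigma_psi[OF psi S] W]
    by (simp add: Sigma_inverse_def)
  have "pincherle psi (W ^^ Suc k) p = smult (of_nat n) ((W ^^ k) (- W (W (pincherle psi S p))))"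
    by (simp only: pincherle_funpow[OF psi W] W' Suc)
  also have "(W ^^ k) (- W (W (pincherle psi S p))) = - (W ^^ Suc n) (pincherle psi S p)"
    by (simp only: Suc poly_linear_minus[OF Sigma_psi_linear[OF Sigma_psi_funpow[OF W]]]
        funpow_Suc_right comp_apply)
  finally show ?thesis
    by (simp only: Suc smult_minus_right)
qed (simp add: pincherle_id)

lemma pincherle_monom_xhat:
  assumes psi: "admissible_psi psi" and L: "poly_linear T" and n: "n > 0"
  shows "T (monom 1 n) - smult (nsub psi n / of_nat n) (pincherle psi T (monom 1 (n - 1)))
    = smult (nsub psi n / of_nat n) (xhat psi (T (monom 1 (n - 1))))"
proof -
  have "xhat psi (monom 1 (n - 1)) = monom (of_nat n / nsub psi n) n"
    using n by (simp add: xhat_monom)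
  then have "pincherle psi T (monom 1 (n - 1))
      = smult (of_nat n / nsub psi n) (T (monom 1 n)) - xhat psi (T (monom 1 (n - 1)))"
    by (simp add: pincherle_def poly_linear_monom[OF L, of "of_nat n / nsub psi n"])
  then show ?thesis
    using n nsub_nonzero[OF psi n] by (simp add: smult_diff_right)
qed

section \<open>The basic sequence of \<open>\<partial>\<^sub>\<psi> S\<close>\<close>

lemma pincherle_psi_deriv_comp:
  "admissible_psi psi \<Longrightarrow>
    pincherle psi (psi_deriv psi \<circ> S) p = psi_deriv psi (pincherle psi S p) + S p"
  by (simp add: pincherle_comp[OF poly_linear_psi_deriv] pincherle_psi_deriv)

lemma pincherle_psi_deriv_comp_inverse_funpow_monom:
  assumes psi: "admissible_psi psi" and SW: "Sigma_inverse psi S W" and n: "n > 0"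
  shows "pincherle psi (psi_deriv psi \<circ> S) ((W ^^ Suc n) (monom 1 n))
    = (W ^^ n) (monom 1 n) - smult (nsub psi n / of_nat n) (pincherle psi (W ^^ n) (monom 1 (n - 1)))"
proof -
  let ?S' = "pincherle psi S" and ?Wn = "W ^^ Suc n"
  have S: "S \<in> Sigma_psi psi" and W: "W \<in> Sigma_psi psi"
    using SW by (simp_all add: Sigma_inverse_def)
  have S': "?S' \<in> Sigma_psi psi"
    by (rule pincherle_Sigma_psi[OF psi S])
  have Wn: "?Wn \<in> Sigma_psi psi"
    by (rule Sigma_psi_funpow[OF W])
  have "psi_deriv psi (?S' (?Wn (monom 1 n))) = ?S' (?Wn (psi_deriv psi (monom 1 n)))"
    by (simp only: Sigma_psi_commute_deriv[OF psi S'] Sigma_psi_commute_deriv[OF psi Wn])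
  also have "psi_deriv psi (monom 1 n) = smult (nsub psi n) (monom 1 (n - 1))"
    by (simp add: psi_deriv_monom smult_monom)
  also have "?S' (?Wn (smult (nsub psi n) (monom 1 (n - 1))))
      = smult (nsub psi n) (?Wn (?S' (monom 1 (n - 1))))"
    by (simp only: poly_linear_smult[OF Sigma_psi_linear[OF Wn]]
        poly_linear_smult[OF Sigma_psi_linear[OF S']] Sigma_psi_commute[OF psi S' Wn])
  finally have "psi_deriv psi (?S' (?Wn (monom 1 n)))
      = - smult (nsub psi n / of_nat n) (pincherle psi (W ^^ n) (monom 1 (n - 1)))"
    using n by (simp add: pincherle_inverse_funpow[OF psi SW])
  moreover have "S (?Wn (monom 1 n)) = (W ^^ n) (monom 1 n)"
    by (simp add: Sigma_inverse_apply(1)[OF SW])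
  ultimately show ?thesis
    by (simp add: pincherle_psi_deriv_comp[OF psi])
qed

lemma psi_deriv_comp_inverse_funpow_monom:
  assumes psi: "admissible_psi psi" and SW: "Sigma_inverse psi S W"
  shows "psi_deriv psi (S ((W ^^ Suc n) (monom 1 n))) = smult (nsub psi n) ((W ^^ n) (monom 1 (n - 1)))"
proof -
  have Wn: "W ^^ n \<in> Sigma_psi psi"
    using SW by (simp add: Sigma_inverse_def Sigma_psi_funpow)
  have "psi_deriv psi (S ((W ^^ Suc n) (monom 1 n))) = (W ^^ n) (psi_deriv psi (monom 1 n))"
    by (simp add: Sigma_inverse_apply(1)[OF SW] Sigma_psi_commute_deriv[OF psi Wn])
  also have "psi_deriv psi (monom 1 n) = smult (nsub psi n) (monom 1 (n - 1))"
    by (simp add: psi_deriv_monom smult_monom)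
  finally show ?thesis
    by (simp only: poly_linear_smult[OF Sigma_psi_linear[OF Wn]])
qed

lemma pincherle_psi_deriv_comp_inverse_recurrence:
  assumes psi: "admissible_psi psi" and SW: "Sigma_inverse psi S W"
  defines "Q \<equiv> psi_deriv psi \<circ> S"
  shows "Q (pincherle psi Q ((W ^^ Suc n) (monom 1 n)))
    = smult (nsub psi n) (pincherle psi Q ((W ^^ n) (monom 1 (n - 1))))"
proof -
  have Q: "Q \<in> Sigma_psi psi"
    using SW by (simp add: Q_def Sigma_inverse_def Sigma_psi_comp Sigma_psi_psi_deriv[OF psi])
  have Q': "pincherle psi Q \<in> Sigma_psi psi"
    by (rule pincherle_Sigma_psi[OF psi Q])
  have "Q (pincherle psi Q ((W ^^ Suc n) (monom 1 n)))
      = pincherle psi Q (Q ((W ^^ Suc n) (monom 1 n)))"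
    by (rule Sigma_psi_commute[OF psi Q Q'])
  also have "Q ((W ^^ Suc n) (monom 1 n)) = smult (nsub psi n) ((W ^^ n) (monom 1 (n - 1)))"
    unfolding Q_def comp_apply by (rule psi_deriv_comp_inverse_funpow_monom[OF psi SW])
  finally show ?thesis
    by (simp only: poly_linear_smult[OF Sigma_psi_linear[OF Q']])
qed

lemma pincherle_psi_deriv_comp_inverse_one:
  assumes psi: "admissible_psi psi" and SW: "Sigma_inverse psi S W"
  shows "pincherle psi (psi_deriv psi \<circ> S) (W 1) = 1"
proof -
  have W: "W \<in> Sigma_psi psi" and S': "pincherle psi S \<in> Sigma_psi psi"
    using SW by (simp_all add: Sigma_inverse_def pincherle_Sigma_psi[OF psi])
  have "psi_deriv psi (pincherle psi S (W 1)) = 0"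
    by (simp add: Sigma_psi_commute_deriv[OF psi S', symmetric]
        Sigma_psi_commute_deriv[OF psi W, symmetric]
        poly_linear_zero[OF Sigma_psi_linear[OF W]] poly_linear_zero[OF Sigma_psi_linear[OF S']])
  then show ?thesis
    by (simp add: pincherle_psi_deriv_comp[OF psi] Sigma_inverse_apply(1)[OF SW])
qed

lemma pincherle_psi_deriv_comp_invertible:
  assumes psi: "admissible_psi psi" and SW: "Sigma_inverse psi S W"
  shows "\<exists>R. Sigma_inverse psi (pincherle psi (psi_deriv psi \<circ> S)) R"
proof -
  let ?Q' = "pincherle psi (psi_deriv psi \<circ> S)"
  have S: "S \<in> Sigma_psi psi" and S': "pincherle psi S \<in> Sigma_psi psi"
    using SW by (simp_all add: Sigma_inverse_def pincherle_Sigma_psi[OF psi])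
  have Q': "?Q' \<in> Sigma_psi psi"
    by (intro pincherle_Sigma_psi Sigma_psi_comp Sigma_psi_psi_deriv psi S)
  have "psi_deriv psi (pincherle psi S 1) = 0"
    by (simp add: Sigma_psi_commute_deriv[OF psi S', symmetric]
        poly_linear_zero[OF Sigma_psi_linear[OF S']])
  then have "?Q' 1 = S 1"
    by (simp add: pincherle_psi_deriv_comp[OF psi])
  then have "bij ?Q'"
    using Sigma_psi_inj[OF psi Q'] Sigma_psi_surj[OF psi Q'] Sigma_inverse_coeff_one[OF psi SW]
    by (simp add: bij_def)
  then show ?thesis
    using Sigma_inverse_inv[OF Q'] by blast
qed

lemma psi_deriv_comp_inverse_eq_0_imp_const:
  assumes psi: "admissible_psi psi" and SW: "Sigma_inverse psi S W"
    and "psi_deriv psi (S f) = 0"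
  shows "f = [:coeff f 0:]"
proof (rule psi_deriv_eq_0_imp_const[OF psi])
  have W: "W \<in> Sigma_psi psi"
    using SW by (simp add: Sigma_inverse_def)
  have "psi_deriv psi f = W (psi_deriv psi (S f))"
    by (simp add: Sigma_psi_commute_deriv[OF psi W] Sigma_inverse_apply(2)[OF SW])
  then show "psi_deriv psi f = 0"
    by (simp add: assms(3) poly_linear_zero[OF Sigma_psi_linear[OF W]])
qed

lemma psi_basic_seq_eqI:
  assumes "psi_basic_seq psi Q p" and L: "poly_linear Q"
    and kernel: "\<And>f. Q f = 0 \<Longrightarrow> f = [:coeff f 0:]"
    and "r 0 = 1" and "\<And>n. n > 0 \<Longrightarrow> poly (r n) 0 = 0"
    and "\<And>n. n > 0 \<Longrightarrow> Q (r n) = smult (nsub psi n) (r (n - 1))"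
  shows "p n = r n"
proof (induction n)
  case 0
  then show ?case
    using assms(1,4) by (simp add: psi_basic_seq_def)
next
  case (Suc n)
  let ?g = "p (Suc n) - r (Suc n)"
  have "Q ?g = 0"
    using assms(1,6) Suc.IH by (simp add: psi_basic_seq_def poly_linear_diff[OF L])
  then have "?g = [:coeff ?g 0:]"
    by (rule kernel)
  also have "coeff ?g 0 = 0"
    using assms(1,5) by (simp add: psi_basic_seq_def flip: poly_0_coeff_0)
  finally show ?case
    by simp
qed

theorem mainTheorem11:
  fixes psi :: "nat \<Rightarrow> 'a::field_char_0"
    and Q S Sinv :: "'a poly \<Rightarrow> 'a poly"
    and p :: "nat \<Rightarrow> 'a poly"
  assumes psi: "admissible_psi psi"
    and delta: "psi_delta psi Q"
    and QS: "Q = psi_deriv psi \<circ> S"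
    and Sinv: "Sigma_inverse psi S Sinv"
    and basic: "psi_basic_seq psi Q p"
  shows "(\<forall>n>0. p n = pincherle psi Q ((Sinv ^^ (n + 1)) (monom 1 n)))
       \<and> (\<forall>n>0. p n = (Sinv ^^ n) (monom 1 n)
              - smult (nsub psi n / of_nat n) (pincherle psi (Sinv ^^ n) (monom 1 (n - 1))))
       \<and> (\<forall>n>0. p n = smult (nsub psi n / of_nat n) (xhat psi ((Sinv ^^ n) (monom 1 (n - 1)))))
       \<and> (\<exists>R. Sigma_inverse psi (pincherle psi Q) R)
       \<and> (\<forall>R. Sigma_inverse psi (pincherle psi Q) R \<longrightarrow>
              (\<forall>n>0. p n = smult (nsub psi n / of_nat n) (xhat psi (R (p (n - 1))))))"
proof -
  define r where "r n = pincherle psi Q ((Sinv ^^ Suc n) (monom 1 n))" for n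
  have Wn: "poly_linear (Sinv ^^ n)" for n
    using Sinv unfolding Sigma_inverse_def by (blast intro: Sigma_psi_linear Sigma_psi_funpow)
  have r2: "r n = (Sinv ^^ n) (monom 1 n)
      - smult (nsub psi n / of_nat n) (pincherle psi (Sinv ^^ n) (monom 1 (n - 1)))" if "n > 0" for n
    unfolding r_def QS by (rule pincherle_psi_deriv_comp_inverse_funpow_monom[OF psi Sinv that])
  have r3: "r n = smult (nsub psi n / of_nat n) (xhat psi ((Sinv ^^ n) (monom 1 (n - 1))))"
    if "n > 0" for n
    using r2[OF that] pincherle_monom_xhat[OF psi Wn that] by simp
  have "p n = r n" for n
  proof (rule psi_basic_seq_eqI[OF basic])
    show "poly_linear Q"
      using delta unfolding psi_delta_def by (blast intro: Sigma_psi_linear)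
    show "f = [:coeff f 0:]" if "Q f = 0" for f
      using that psi_deriv_comp_inverse_eq_0_imp_const[OF psi Sinv] by (simp add: QS)
    show "r 0 = 1"
      using pincherle_psi_deriv_comp_inverse_one[OF psi Sinv] by (simp add: r_def QS)
    show "poly (r n) 0 = 0" if "n > 0" for n
      by (simp add: r3[OF that] poly_0_coeff_0 coeff_xhat)
    show "Q (r n) = smult (nsub psi n) (r (n - 1))" if "n > 0" for n
      using pincherle_psi_deriv_comp_inverse_recurrence[OF psi Sinv, of n] that by (simp add: r_def QS)
  qed
  moreover have "R (p (n - 1)) = (Sinv ^^ n) (monom 1 (n - 1))"
    if "Sigma_inverse psi (pincherle psi Q) R" "n > 0" for R n
    using \<open>p (n - 1) = r (n - 1)\<close> Sigma_inverse_apply(2)[OF that(1)] that(2) by (simp add: r_def)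
  ultimately show ?thesis
    using r2 r3 pincherle_psi_deriv_comp_invertible[OF psi Sinv] by (simp add: r_def QS)
qed

end
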